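(* The energy $W^+_{\mathrm{magic}}\colon\mathrm{GL}^+(2)\to\mathbb{R}$, \[ W^+_{\mathrm{magic}}(F)=\frac{\lambda_{\max}}{\lambda_{\min}}-\log\!\left(\frac{\lambda_{\max}}{\lambda_{\min}}\right)+\log\det F, \] where $\lambda_{\max}\ge\lambda_{\min}>0$ are the ordered singular values of $F$, is not polyconvex.
   Context: $\mathrm{GL}^+(2)=\{F\in\mathbb{R}^{2\times2}:\det F>0\}$. A function $W\colon\mathrm{GL}^+(2)\to\mathbb{R}$ is polyconvex if its extension $\widehat W\colon\mathbb{R}^{2\times2}\to\mathbb{R}\cup\{+\infty\}$ ($\widehat W=W$ on $\mathrm{GL}^+(2)$, $+\infty$ elsewhere) can be written as $\widehat W(F)=P(F,\det F)$ for all $F\in\mathbb{R}^{2\times2}$ with some convex function $P\colon\mathbb{R}^{2\times2}\times\mathbb{R}\to\mathbb{R}\cup\{+\infty\}$. *)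

theory Defs
  imports "HOL-Analysis.Analysis" "HOL-Library.Extended_Real"
begin

definition GLplus2 :: "(real^2^2) set" where
  "GLplus2 = {F. det F > 0}"

definition sq_sing_vals :: "real^2^2 \<Rightarrow> real set" where
  "sq_sing_vals F = {\<mu>. \<exists>v. v \<noteq> 0 \<and> (transpose F ** F) *v v = \<mu> *\<^sub>R v}"

definition lambda_max :: "real^2^2 \<Rightarrow> real" where
  "lambda_max F = sqrt (Max (sq_sing_vals F))"

definition lambda_min :: "real^2^2 \<Rightarrow> real" where
  "lambda_min F = sqrt (Min (sq_sing_vals F))"

definition W_magic_plus :: "real^2^2 \<Rightarrow> real" where
  "W_magic_plus F = lambda_max F / lambda_min F - ln (lambda_max F / lambda_min F) + ln (det F)"

definition ext_convex :: "('a::real_vector \<Rightarrow> ereal) \<Rightarrow> bool" where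
  "ext_convex P \<longleftrightarrow> (\<forall>x y t. 0 < t \<and> t < 1 \<longrightarrow>
      P ((1 - t) *\<^sub>R x + t *\<^sub>R y) \<le> ereal (1 - t) * P x + ereal t * P y)"

definition extend_GLplus :: "(real^2^2 \<Rightarrow> real) \<Rightarrow> real^2^2 \<Rightarrow> ereal" where
  "extend_GLplus W F = (if F \<in> GLplus2 then ereal (W F) else \<infinity>)"

definition polyconvex2 :: "(real^2^2 \<Rightarrow> real) \<Rightarrow> bool" where
  "polyconvex2 W \<longleftrightarrow> (\<exists>P :: (real^2^2) \<times> real \<Rightarrow> ereal.
      (\<forall>z. P z \<noteq> -\<infinity>) \<and> ext_convex P \<and> (\<forall>F. extend_GLplus W F = P (F, det F)))"

end

theory Submission
  imports Defs
begin

text \<open>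
  On scalar matrices W is 1 + log det, which tends to -\<infinity> as the matrix shrinks to 0,
  whereas W stays bounded on diagonal matrices with entries in [1/2, 3]. For small e > 0,
  the point (I, 2) is the midpoint of (e I, e^2) and ((2 - e) I, 4 - e^2), and the latter
  is in turn the midpoint of two points (diag(a, b), a b) on the graph of det with
  entries in [1/2, 3]. A convex representative P of W would therefore satisfy
  P (I, 2) \<le> 8 + log e for all small e, which is impossible for a value other than -\<infinity>.
\<close>

definition diag2 :: "real \<Rightarrow> real \<Rightarrow> real^2^2" where
  "diag2 a b = (\<chi> i j. if i = j then (if i = 1 then a else b) else 0)"

lemma midpoint_diag2: "midpoint (diag2 a b) (diag2 c d) = diag2 ((a + c) / 2) ((b + d) / 2)"
  by (simp add: vec_eq_iff forall_2 diag2_def midpoint_def)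

lemma det_diag2: "det (diag2 a b) = a * b"
  by (simp add: det_2 diag2_def)

lemma transpose_diag2_mult_diag2: "transpose (diag2 a b) ** diag2 a b = diag2 (a\<^sup>2) (b\<^sup>2)"
  by (simp add: vec_eq_iff forall_2 diag2_def matrix_matrix_mult_def transpose_def sum_2
      power2_eq_square)

lemma diag2_eigenvalues: "{\<mu>. \<exists>v. v \<noteq> 0 \<and> diag2 a b *v v = \<mu> *\<^sub>R v} = {a, b}"
proof (intro set_eqI iffI)
  fix \<mu> assume "\<mu> \<in> {\<mu>. \<exists>v. v \<noteq> 0 \<and> diag2 a b *v v = \<mu> *\<^sub>R v}"
  then obtain v :: "real^2" where "v \<noteq> 0" and eigen: "diag2 a b *v v = \<mu> *\<^sub>R v"
    by auto
  then have "v$1 \<noteq> 0 \<or> v$2 \<noteq> 0"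
    by (auto simp: vec_eq_iff forall_2)
  moreover have "a * v$1 = \<mu> * v$1" "b * v$2 = \<mu> * v$2"
    using eigen by (simp_all add: vec_eq_iff forall_2 diag2_def matrix_vector_mult_def sum_2)
  ultimately show "\<mu> \<in> {a, b}"
    by auto
next
  fix \<mu> assume "\<mu> \<in> {a, b}"
  have "diag2 a b *v axis 1 1 = a *\<^sub>R axis 1 1" "diag2 a b *v axis 2 1 = b *\<^sub>R axis 2 1"
    by (simp_all add: vec_eq_iff forall_2 diag2_def matrix_vector_mult_def sum_2 axis_def)
  moreover have "axis 1 1 \<noteq> (0::real^2)" "axis 2 1 \<noteq> (0::real^2)"
    by (simp_all add: axis_eq_0_iff)
  ultimately show "\<mu> \<in> {\<mu>. \<exists>v. v \<noteq> 0 \<and> diag2 a b *v v = \<mu> *\<^sub>R v}"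
    using \<open>\<mu> \<in> {a, b}\<close> by blast
qed

lemma sq_sing_vals_diag2: "sq_sing_vals (diag2 a b) = {a\<^sup>2, b\<^sup>2}"
  unfolding sq_sing_vals_def transpose_diag2_mult_diag2 diag2_eigenvalues ..

lemma lambda_max_diag2: "lambda_max (diag2 a b) = max \<bar>a\<bar> \<bar>b\<bar>"
proof -
  have "Max {a\<^sup>2, b\<^sup>2} = (max \<bar>a\<bar> \<bar>b\<bar>)\<^sup>2"
    by (auto simp: max_def abs_le_square_iff)
  then show ?thesis
    by (simp add: lambda_max_def sq_sing_vals_diag2)
qed

lemma lambda_min_diag2: "lambda_min (diag2 a b) = min \<bar>a\<bar> \<bar>b\<bar>"
proof -
  have "Min {a\<^sup>2, b\<^sup>2} = (min \<bar>a\<bar> \<bar>b\<bar>)\<^sup>2"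
    by (auto simp: min_def abs_le_square_iff)
  then show ?thesis
    by (simp add: lambda_min_def sq_sing_vals_diag2)
qed

lemma W_magic_plus_diag2:
  assumes "0 < a" "0 < b"
  shows "W_magic_plus (diag2 a b) = max a b / min a b - ln (max a b / min a b) + ln (a * b)"
  using assms by (simp add: W_magic_plus_def lambda_max_diag2 lambda_min_diag2 det_diag2)

lemma W_magic_plus_scalar:
  assumes "0 < e"
  shows "W_magic_plus (diag2 e e) = 1 + 2 * ln e"
  using assms by (simp add: W_magic_plus_diag2 ln_mult)

lemma W_magic_plus_diag2_le:
  assumes "0 < a" "0 < b"
  shows "W_magic_plus (diag2 a b) \<le> max a b / min a b + a * b"
proof -
  have "0 \<le> ln (max a b / min a b)"
    using assms by (auto simp: max_def min_def)
  moreover have "ln (a * b) \<le> a * b"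
    using assms by (simp add: ln_less_self less_imp_le)
  ultimately show ?thesis
    using W_magic_plus_diag2[OF assms] by linarith
qed

lemma W_magic_plus_diag2_le_15:
  assumes "a \<in> {1/2..3}" "b \<in> {1/2..3}"
  shows "W_magic_plus (diag2 a b) \<le> 15"
proof -
  have "max a b / min a b \<le> 3 / (1/2)"
    using assms by (intro frac_le) auto
  moreover have "a * b \<le> 3 * 3"
    using assms by (intro mult_mono) auto
  ultimately show ?thesis
    using assms W_magic_plus_diag2_le[of a b] by auto
qed

lemma ext_convex_le:
  assumes "ext_convex P" "0 < t" "t < 1" "P x \<le> ereal a" "P y \<le> ereal b"
  shows "P ((1 - t) *\<^sub>R x + t *\<^sub>R y) \<le> ereal ((1 - t) * a + t * b)"
proof -
  have "P ((1 - t) *\<^sub>R x + t *\<^sub>R y) \<le> ereal (1 - t) * P x + ereal t * P y"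
    using assms(1-3) unfolding ext_convex_def by blast
  also have "\<dots> \<le> ereal (1 - t) * ereal a + ereal t * ereal b"
    using assms(2-5) by (intro add_mono ereal_mult_left_mono) auto
  finally show ?thesis
    by simp
qed

lemma ext_convex_midpoint_le:
  assumes "ext_convex P" "P x \<le> ereal a" "P y \<le> ereal b"
  shows "P (midpoint x y) \<le> ereal ((a + b) / 2)"
  using ext_convex_le[OF assms(1) _ _ assms(2,3), of "1/2"]
  by (simp add: midpoint_def scaleR_add_right add_divide_distrib)

lemma midpoint_Pair: "midpoint (x, s :: real) (y, t) = (midpoint x y, (s + t) / 2)"
  by (simp add: midpoint_def)

lemma polyconvex_rep_diag2:
  assumes "\<forall>F. extend_GLplus W F = P (F, det F)" "0 < a" "0 < b"
  shows "P (diag2 a b, a * b) = ereal (W (diag2 a b))"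
  using assms(1)[rule_format, of "diag2 a b"] assms(2,3)
  by (simp add: extend_GLplus_def GLplus2_def det_diag2)

lemma polyconvex_rep_W_magic_plus_le_ln:
  assumes convex: "ext_convex P" and rep: "\<forall>F. extend_GLplus W_magic_plus F = P (F, det F)"
    and e: "0 < e" "e \<le> 1/5"
  shows "P (diag2 1 1, 2) \<le> ereal (8 + ln e)"
proof -
  define a1 b1 a2 b2 where "a1 = 2 + 3 * e" "b1 = 3 - 3 * e / 2" "a2 = 2 - 5 * e" "b2 = 1 - e / 2"
  have entries: "a1 \<in> {1/2..3}" "b1 \<in> {1/2..3}" "a2 \<in> {1/2..3}" "b2 \<in> {1/2..3}"
    using e by (simp_all add: a1_b1_a2_b2_def)
  have "P (diag2 a1 b1, a1 * b1) \<le> ereal 15" "P (diag2 a2 b2, a2 * b2) \<le> ereal 15"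
    using entries by (simp_all add: polyconvex_rep_diag2[OF rep] W_magic_plus_diag2_le_15)
  then have "P (midpoint (diag2 a1 b1, a1 * b1) (diag2 a2 b2, a2 * b2)) \<le> ereal 15"
    using ext_convex_midpoint_le[OF convex] by fastforce
  moreover have "midpoint (diag2 a1 b1, a1 * b1) (diag2 a2 b2, a2 * b2)
      = (diag2 (2 - e) (2 - e), 4 - e * e)"
  proof -
    have averages: "(a1 + a2) / 2 = 2 - e" "(b1 + b2) / 2 = 2 - e"
      "(a1 * b1 + a2 * b2) / 2 = 4 - e * e"
      by (simp_all add: a1_b1_a2_b2_def field_simps)
    show ?thesis
      unfolding midpoint_Pair midpoint_diag2 averages ..
  qed
  ultimately have "P (diag2 (2 - e) (2 - e), 4 - e * e) \<le> ereal 15"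
    by simp
  moreover have "P (diag2 e e, e * e) \<le> ereal (1 + 2 * ln e)"
    using e by (simp add: polyconvex_rep_diag2[OF rep] W_magic_plus_scalar)
  ultimately have "P (midpoint (diag2 e e, e * e) (diag2 (2 - e) (2 - e), 4 - e * e))
      \<le> ereal ((1 + 2 * ln e + 15) / 2)"
    using ext_convex_midpoint_le[OF convex] by blast
  moreover have "midpoint (diag2 e e, e * e) (diag2 (2 - e) (2 - e), 4 - e * e) = (diag2 1 1, 2)"
    by (simp add: midpoint_Pair midpoint_diag2)
  ultimately show ?thesis
    by (simp add: add_divide_distrib)
qed

theorem lemma4p3:
  shows "\<not> polyconvex2 W_magic_plus"
proof
  assume "polyconvex2 W_magic_plus"
  then obtain P :: "(real^2^2) \<times> real \<Rightarrow> ereal" where finite_below: "\<forall>z. P z \<noteq> -\<infinity>"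
    and convex: "ext_convex P" and rep: "\<forall>F. extend_GLplus W_magic_plus F = P (F, det F)"
    unfolding polyconvex2_def by blast
  obtain p where p: "P (diag2 1 1, 2) = ereal p"
    using polyconvex_rep_W_magic_plus_le_ln[OF convex rep, of "1/5"] finite_below
    by (cases "P (diag2 1 1, 2)") auto
  define e where "e = min (1/5) (exp (p - 9))"
  have "0 < e" "e \<le> 1/5"
    by (simp_all add: e_def)
  then have "p \<le> 8 + ln e"
    using polyconvex_rep_W_magic_plus_le_ln[OF convex rep] p by simp
  moreover have "ln e \<le> p - 9"
  proof -
    have "ln e \<le> ln (exp (p - 9))"
      using \<open>0 < e\<close> by (subst ln_le_cancel_iff) (auto simp: e_def)
    then show ?thesis
      by simp
  qed
  ultimately show False
    by simp
qed

end
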